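(* Let $\{q_k\}$ be a sequence of generalized quadratic forms on $\mathbb{R}^n$. Then: (i) some subsequence of $\{q_k\}$ epi-converges to a function $q\not\equiv\infty$; (ii) if $\{q_k\}$ epi-converges to $q$ and there is $r\ge0$ such that $q_k(w)\ge-r\|w\|^2$ for all $w\in\mathbb{R}^n$ and all sufficiently large $k$, then $q$ is a generalized quadratic form and $q(w)\ge-r\|w\|^2$ for all $w\in\mathbb{R}^n$.
   Context: A generalized quadratic form is a function $q=\frac12\langle\cdot,A\cdot\rangle+\delta_L$ with $A$ a symmetric $n\times n$ matrix and $L$ a linear subspace ($\delta_L$ its indicator). Epi-convergence $q_k\to q$: for every $x$, $\liminf q_k(x_k)\ge q(x)$ for every $x_k\to x$, and $\limsup q_k(x_k)\le q(x)$ for some $x_k\to x$ (equivalently, epigraphs converge in the Painlevé–Kuratowski sense). *)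

theory Defs
  imports "HOL-Analysis.Analysis" "HOL-Library.Extended_Real"
begin

definition gen_quad_form :: "(real^'n \<Rightarrow> ereal) \<Rightarrow> bool" where
  "gen_quad_form q \<longleftrightarrow>
     (\<exists>(A::real^'n^'n) (L::(real^'n) set).
        transpose A = A \<and> subspace L \<and>
        q = (\<lambda>x. if x \<in> L then ereal ((1/2) * (x \<bullet> (A *v x))) else \<infinity>))"

definition epi_converges :: "(nat \<Rightarrow> 'a::topological_space \<Rightarrow> ereal) \<Rightarrow> ('a \<Rightarrow> ereal) \<Rightarrow> bool" where
  "epi_converges qs q \<longleftrightarrow>
     (\<forall>x. (\<forall>xs. xs \<longlonglongrightarrow> x \<longrightarrow> liminf (\<lambda>k. qs k (xs k)) \<ge> q x) \<and>
          (\<exists>xs. xs \<longlonglongrightarrow> x \<and> limsup (\<lambda>k. qs k (xs k)) \<le> q x))"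

end

theory Submission
  imports Defs "HOL-Library.Diagonal_Subsequence"
begin

text \<open>Part (i) is sequential compactness of epi-convergence: along a diagonal subsequence the
  infima of \<open>q\<^sub>k\<close> over each set \<open>b\<^sub>j\<close> of a countable base converge, say to \<open>l\<^sub>j\<close>, and
  \<open>q x = sup {l\<^sub>j | x \<in> b\<^sub>j}\<close> is the epi-limit; it is finite at \<open>0\<close> since every \<open>q\<^sub>k\<close> vanishes
  there.

  For (ii), recovery sequences give \<open>q (t x) \<le> t\<^sup>2 q x\<close> and the parallelogram inequality for the
  epi-limit, and applying them to \<open>1/t\<close> and to \<open>x + y, x - y\<close> turns both into equalities; the
  lower bound \<open>-r \<parallel>w\<parallel>\<^sup>2\<close> passes to the limit. A function with these properties is a generalized
  quadratic form: its finiteness domain \<open>L\<close> is a subspace, and after composition with a linear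
  projection onto \<open>L\<close> its polarization is additive by the parallelogram law and homogeneous
  thanks to the lower bound, hence a symmetric bilinear form.\<close>

section \<open>Quadratic functionals\<close>

lemma additive_of_int_mult:
  fixes g :: "real \<Rightarrow> real"
  assumes add: "\<And>a b. g (a + b) = g a + g b"
  shows "g (of_int m * t) = of_int m * g t"
proof -
  interpret Modules.additive g by standard (rule add)
  have nat_mult: "g (real n * t) = real n * g t" for n
    using sum[of "\<lambda>_. t" "{..<n}"] by simp
  show ?thesis
  proof (cases "m \<ge> 0")
    case True
    then show ?thesis using nat_mult[of "nat m"] by simp
  next
    case False
    then have "of_int m * t = - (real (nat (- m)) * t)" by simp
    then show ?thesis using nat_mult[of "nat (- m)"] False by (simp add: minus)
  qed
qed

lemma additive_bounded_below_imp_linear: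
  fixes h :: "real \<Rightarrow> real"
  assumes add: "\<And>a b. h (a + b) = h a + h b" and bdd: "\<And>s. \<bar>s\<bar> \<le> 1 \<Longrightarrow> - M \<le> h s"
  shows "h t = t * h 1"
proof -
  define g where "g s = h s - s * h 1" for s
  have g_add: "g (a + b) = g a + g b" for a b
    using add[of a b] by (simp add: g_def algebra_simps)
  interpret g: Modules.additive g by standard (rule g_add)
  have g_int: "g (of_int m * s) = of_int m * g s" for m s
    using g_add by (rule additive_of_int_mult)
  have g1: "g 1 = 0" by (simp add: g_def)
  have g_bdd: "\<bar>g s\<bar> \<le> M + \<bar>h 1\<bar>" if "\<bar>s\<bar> \<le> 1" for s
  proof -
    have "\<bar>s * h 1\<bar> \<le> \<bar>h 1\<bar>" using that by (simp add: abs_mult mult_left_le_one_le)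
    then have "- (M + \<bar>h 1\<bar>) \<le> g s" "- (M + \<bar>h 1\<bar>) \<le> g (- s)"
      using bdd[of s] bdd[of "- s"] that by (auto simp: g_def)
    then show ?thesis using g.minus[of s] by linarith
  qed
  show ?thesis
  proof (rule ccontr)
    assume "h t \<noteq> t * h 1"
    then have "g t \<noteq> 0" by (simp add: g_def)
    then obtain n :: nat where n: "M + \<bar>h 1\<bar> < real n * \<bar>g t\<bar>"
      using reals_Archimedean3[of "\<bar>g t\<bar>"] by auto
    define s where "s = real n * t - of_int \<lfloor>real n * t\<rfloor>"
    have "\<bar>s\<bar> \<le> 1" unfolding s_def by linarith
    moreover have "g s = real n * g t"
      using g_int[of "int n" t] g_int[of "\<lfloor>real n * t\<rfloor>" 1] g1 by (simp add: s_def g.diff)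
    ultimately show False using g_bdd[of s] n by (simp add: abs_mult)
  qed
qed

lemma bilinear_symmetric_eq_matrix:
  fixes \<beta> :: "real^'n \<Rightarrow> real^'n \<Rightarrow> real"
  assumes bil: "bilinear \<beta>" and sym: "\<And>x y. \<beta> x y = \<beta> y x"
  obtains A :: "real^'n^'n" where "transpose A = A" "\<beta> = (\<lambda>x y. x \<bullet> (A *v y))"
proof
  define A :: "real^'n^'n" where "A = (\<chi> i j. \<beta> (axis i 1) (axis j 1))"
  show "transpose A = A" by (simp add: A_def transpose_def vec_eq_iff sym)
  have "\<beta> x y = x \<bullet> (A *v y)" for x y
  proof -
    have "\<beta> x y = \<beta> (\<Sum>i\<in>UNIV. x$i *\<^sub>R axis i 1) (\<Sum>j\<in>UNIV. y$j *\<^sub>R axis j 1)"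
      by (simp add: basis_expansion flip: scalar_mult_eq_scaleR)
    also have "\<dots> = (\<Sum>i\<in>UNIV. \<Sum>j\<in>UNIV. x$i * (A$i$j * y$j))"
      by (simp add: bilinear_sum[OF bil] bilinear_lmul[OF bil] bilinear_rmul[OF bil]
          sum.cartesian_product A_def mult_ac)
    also have "\<dots> = x \<bullet> (A *v y)"
      by (simp add: inner_vec_def matrix_vector_mult_def sum_distrib_left)
    finally show ?thesis .
  qed
  then show "\<beta> = (\<lambda>x y. x \<bullet> (A *v y))" by (simp add: fun_eq_iff)
qed

locale quadratic_functional =
  fixes g :: "'a::real_normed_vector \<Rightarrow> real" and c :: real
  assumes parallelogram: "g (x + y) + g (x - y) = 2 * g x + 2 * g y"
    and scaleR: "g (t *\<^sub>R x) = t\<^sup>2 * g x"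
    and bounded_below: "- c * (norm x)\<^sup>2 \<le> g x"
begin

definition polar :: "'a \<Rightarrow> 'a \<Rightarrow> real"
  where "polar x y = (g (x + y) - g (x - y)) / 2"

lemma zero: "g 0 = 0"
  using scaleR[of 0] by simp

lemma minus: "g (- x) = g x"
  using scaleR[of "- 1" x] by simp

lemma polar_commute: "polar x y = polar y x"
  using minus[of "x - y"] by (simp add: polar_def add.commute)

lemma polar_diag: "polar x x = 2 * g x"
  using scaleR[of 2 x] by (simp add: polar_def zero scaleR_2)

lemma polar_add_left: "polar (a + b) y = polar a y + polar b y"
proof -
  have mid: "polar (x + z) y + polar (x - z) y = 2 * polar x y" for x z
  proof -
    have "g ((x + z) + y) + g ((x - z) + y) = 2 * g (x + y) + 2 * g z"
      using parallelogram[of "x + y" z] by (simp add: algebra_simps)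
    moreover have "g ((x + z) - y) + g ((x - z) - y) = 2 * g (x - y) + 2 * g z"
      using parallelogram[of "x - y" z] by (simp add: algebra_simps)
    ultimately show ?thesis unfolding polar_def by argo
  qed
  have double: "polar (2 *\<^sub>R x) y = 2 * polar x y" for x
    using mid[of x x] minus[of y] by (simp add: polar_def scaleR_2)
  define m where "m = (1/2) *\<^sub>R (a + b)"
  define d where "d = (1/2) *\<^sub>R (a - b)"
  have "m + d = a" "m - d = b" "2 *\<^sub>R m = a + b"
    by (simp_all add: m_def d_def algebra_simps flip: scaleR_2)
  then show ?thesis using mid[of m d] double[of m] by simp
qed

text \<open>The parallelogram law only yields additivity; homogeneity comes from the lower bound, since
  additive functions need not be linear.\<close>
lemma polar_scaleR_left: "polar (t *\<^sub>R x) y = t * polar x y"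
proof -
  define M where "M = \<bar>c\<bar> * (norm x + norm y)\<^sup>2 + \<bar>g x\<bar> + \<bar>g y\<bar>"
  have add: "polar ((a + b) *\<^sub>R x) y = polar (a *\<^sub>R x) y + polar (b *\<^sub>R x) y" for a b
    by (simp add: scaleR_add_left polar_add_left)
  have bdd: "- M \<le> polar (s *\<^sub>R x) y" if s: "\<bar>s\<bar> \<le> 1" for s
  proof -
    have "\<bar>s\<bar> * norm x \<le> norm x"
      using s by (simp add: mult_left_le_one_le)
    then have "norm (s *\<^sub>R x + y) \<le> norm x + norm y"
      using norm_triangle_ineq[of "s *\<^sub>R x" y] by simp
    then have "(norm (s *\<^sub>R x + y))\<^sup>2 \<le> (norm x + norm y)\<^sup>2"
      by (simp add: power_mono)
    then have "c * (norm (s *\<^sub>R x + y))\<^sup>2 \<le> \<bar>c\<bar> * (norm x + norm y)\<^sup>2"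
      by (intro mult_mono) auto
    then have "- \<bar>c\<bar> * (norm x + norm y)\<^sup>2 \<le> g (s *\<^sub>R x + y)"
      using bounded_below[of "s *\<^sub>R x + y"] by linarith
    moreover have "s\<^sup>2 * g x \<le> \<bar>g x\<bar>"
    proof -
      have "s\<^sup>2 * g x \<le> s\<^sup>2 * \<bar>g x\<bar>" by (simp add: mult_left_mono)
      also have "\<dots> \<le> \<bar>g x\<bar>" using s by (simp add: abs_square_le_1 mult_left_le_one_le)
      finally show ?thesis .
    qed
    moreover have "polar (s *\<^sub>R x) y = g (s *\<^sub>R x + y) - s\<^sup>2 * g x - g y"
      using parallelogram[of "s *\<^sub>R x" y] scaleR[of s x] by (simp add: polar_def)
    ultimately show ?thesis unfolding M_def by linarith
  qed
  have "polar (t *\<^sub>R x) y = t * polar (1 *\<^sub>R x) y"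
    using add bdd by (rule additive_bounded_below_imp_linear)
  then show ?thesis by simp
qed

lemma bilinear_polar: "bilinear polar"
proof -
  have left: "linear (\<lambda>x. polar x y)" for y
    by (rule linearI) (simp_all add: polar_add_left polar_scaleR_left)
  moreover have "linear (\<lambda>y. polar x y)" for x
    using left[of x] by (simp add: polar_commute)
  ultimately show ?thesis by (simp add: bilinear_def)
qed

end

lemma quadratic_functional_eq_symmetric_matrix:
  fixes g :: "real^'n \<Rightarrow> real"
  assumes "quadratic_functional g c"
  obtains A :: "real^'n^'n" where "transpose A = A" "g = (\<lambda>x. (1/2) * (x \<bullet> (A *v x)))"
proof -
  interpret quadratic_functional g c by fact
  show ?thesis
  proof (rule bilinear_symmetric_eq_matrix[OF bilinear_polar polar_commute])
    fix A :: "real^'n^'n"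
    assume sym: "transpose A = A" and A: "polar = (\<lambda>x y. x \<bullet> (A *v y))"
    have "g = (\<lambda>x. (1/2) * (x \<bullet> (A *v x)))"
      using polar_diag A by (simp add: fun_eq_iff)
    with sym show thesis by (rule that)
  qed
qed

section \<open>Generalized quadratic forms\<close>

lemma subspace_scaleR_iff:
  assumes "subspace L" "t \<noteq> 0"
  shows "t *\<^sub>R x \<in> L \<longleftrightarrow> x \<in> L"
  using subspace_mul[OF assms(1), of "t *\<^sub>R x" "inverse t"] subspace_mul[OF assms(1), of x t] assms(2)
  by auto

lemma subspace_add_diff_iff:
  assumes "subspace L"
  shows "x + y \<in> L \<and> x - y \<in> L \<longleftrightarrow> x \<in> L \<and> y \<in> L"
proof
  assume "x + y \<in> L \<and> x - y \<in> L"
  then have "(x + y) + (x - y) \<in> L" "(x + y) - (x - y) \<in> L"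
    using assms subspace_add subspace_diff by blast+
  then have "2 *\<^sub>R x \<in> L" "2 *\<^sub>R y \<in> L"
    by (simp_all add: scaleR_2 algebra_simps)
  then show "x \<in> L \<and> y \<in> L"
    using subspace_scaleR_iff[OF assms] by simp
qed (use assms subspace_add subspace_diff in blast)

lemma gen_quad_formE:
  assumes "gen_quad_form q"
  obtains A L where "transpose A = A" "subspace L"
    "q = (\<lambda>x. if x \<in> L then ereal ((1/2) * (x \<bullet> (A *v x))) else \<infinity>)"
  using assms unfolding gen_quad_form_def by blast

lemma gen_quad_form_zero: "gen_quad_form q \<Longrightarrow> q 0 = 0"
  by (metis gen_quad_formE subspace_0 inner_zero_left mult_zero_right zero_ereal_def)

lemma gen_quad_form_scaleR:
  assumes "gen_quad_form q" "t \<noteq> 0"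
  shows "q (t *\<^sub>R x) = ereal (t\<^sup>2) * q x"
proof -
  obtain A L where "transpose A = A" and L: "subspace L"
    and q: "q = (\<lambda>x. if x \<in> L then ereal ((1/2) * (x \<bullet> (A *v x))) else \<infinity>)"
    using assms(1) by (rule gen_quad_formE)
  show ?thesis
    using subspace_scaleR_iff[OF L assms(2), of x] assms(2)
    by (simp add: q matrix_vector_mult_scaleR power2_eq_square)
qed

lemma gen_quad_form_parallelogram:
  assumes "gen_quad_form q"
  shows "q (x + y) + q (x - y) = 2 * q x + 2 * q y"
proof -
  obtain A L where "transpose A = A" and L: "subspace L"
    and q: "q = (\<lambda>x. if x \<in> L then ereal ((1/2) * (x \<bullet> (A *v x))) else \<infinity>)"
    using assms by (rule gen_quad_formE)
  show ?thesis
  proof (cases "x \<in> L \<and> y \<in> L")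
    case True
    then show ?thesis
      using subspace_add_diff_iff[OF L, of x y]
      by (simp add: q algebra_simps inner_add_left inner_add_right inner_diff_left inner_diff_right)
  next
    case False
    then show ?thesis using subspace_add_diff_iff[OF L, of x y] by (auto simp: q)
  qed
qed

lemma subspace_finite_domain:
  fixes f :: "'a::real_vector \<Rightarrow> ereal"
  assumes not_MInfty: "\<And>x. f x \<noteq> -\<infinity>" and zero: "f 0 = 0"
    and scaleR: "\<And>t x. t \<noteq> 0 \<Longrightarrow> f (t *\<^sub>R x) = ereal (t\<^sup>2) * f x"
    and parallelogram: "\<And>x y. f (x + y) + f (x - y) = 2 * f x + 2 * f y"
  shows "subspace {x. f x \<noteq> \<infinity>}"
proof (rule subspaceI)
  show "0 \<in> {x. f x \<noteq> \<infinity>}" by (simp add: zero)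
next
  fix x y assume "x \<in> {x. f x \<noteq> \<infinity>}" "y \<in> {x. f x \<noteq> \<infinity>}"
  then have "2 * f x + 2 * f y \<noteq> \<infinity>"
    using not_MInfty[of x] not_MInfty[of y] by (cases "f x"; cases "f y") auto
  then show "x + y \<in> {x. f x \<noteq> \<infinity>}"
    using parallelogram[of x y] not_MInfty[of "x - y"] by auto
next
  fix t x assume x: "x \<in> {x. f x \<noteq> \<infinity>}"
  show "t *\<^sub>R x \<in> {x. f x \<noteq> \<infinity>}"
  proof (cases "t = 0")
    case False
    then show ?thesis
      using x not_MInfty[of x] scaleR[OF False, of x] by (cases "f x") auto
  qed (simp add: zero)
qed

lemma quadratic_functional_finite_part:
  fixes f :: "'a::real_normed_vector \<Rightarrow> ereal" and P :: "'b::real_normed_vector \<Rightarrow> 'a"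
  assumes bdd: "\<And>x. ereal (- c * (norm x)\<^sup>2) \<le> f x"
    and zero: "f 0 = 0"
    and scaleR: "\<And>t x. t \<noteq> 0 \<Longrightarrow> f (t *\<^sub>R x) = ereal (t\<^sup>2) * f x"
    and parallelogram: "\<And>x y. f (x + y) + f (x - y) = 2 * f x + 2 * f y"
    and P: "linear P" "\<And>x. f (P x) \<noteq> \<infinity>" "\<And>x. norm (P x) \<le> C * norm x"
  shows "quadratic_functional (\<lambda>x. real_of_ereal (f (P x))) (\<bar>c\<bar> * C\<^sup>2)"
proof
  fix x y
  have f_P: "f (P z) = ereal (real_of_ereal (f (P z)))" for z
    using P(2)[of z] bdd[of "P z"] by (cases "f (P z)") auto
  have "f (P (x + y)) + f (P (x - y)) = 2 * f (P x) + 2 * f (P y)"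
    using parallelogram[of "P x" "P y"] linear_add[OF P(1)] linear_diff[OF P(1)] by simp
  then show "real_of_ereal (f (P (x + y))) + real_of_ereal (f (P (x - y)))
      = 2 * real_of_ereal (f (P x)) + 2 * real_of_ereal (f (P y))"
    by (subst (asm) (1 2 3 4) f_P) simp
next
  fix t x
  have "f (P (t *\<^sub>R x)) = ereal (t\<^sup>2) * f (P x)"
    using scaleR[of t "P x"] linear_scale[OF P(1)] linear_0[OF P(1)] zero
    by (cases "t = 0") auto
  then show "real_of_ereal (f (P (t *\<^sub>R x))) = t\<^sup>2 * real_of_ereal (f (P x))"
    by simp
next
  fix x
  have "c * (norm (P x))\<^sup>2 \<le> \<bar>c\<bar> * (C * norm x)\<^sup>2"
    using P(3)[of x] by (intro mult_mono power_mono) auto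
  then show "- (\<bar>c\<bar> * C\<^sup>2) * (norm x)\<^sup>2 \<le> real_of_ereal (f (P x))"
    using bdd[of "P x"] P(2)[of x] by (cases "f (P x)") (auto simp: power_mult_distrib)
qed

lemma gen_quad_formI:
  fixes f :: "real^'n \<Rightarrow> ereal"
  assumes bdd: "\<And>x. ereal (- c * (norm x)\<^sup>2) \<le> f x"
    and zero: "f 0 = 0"
    and scaleR: "\<And>t x. t \<noteq> 0 \<Longrightarrow> f (t *\<^sub>R x) = ereal (t\<^sup>2) * f x"
    and parallelogram: "\<And>x y. f (x + y) + f (x - y) = 2 * f x + 2 * f y"
  shows "gen_quad_form f"
proof -
  define L where "L = {x. f x \<noteq> \<infinity>}"
  have not_MInfty: "f x \<noteq> -\<infinity>" for x
    using bdd[of x] by auto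
  have "subspace L"
    unfolding L_def using not_MInfty zero scaleR parallelogram by (rule subspace_finite_domain)
  obtain P where P: "linear P" "\<And>x. P x \<in> L" "\<And>x. x \<in> L \<Longrightarrow> P x = x"
    using linear_exists_left_inverse_on[OF linear_id \<open>subspace L\<close>] by auto
  obtain C where C: "\<And>x. norm (P x) \<le> C * norm x"
    using linear_bounded_pos[OF P(1)] by blast
  have "f (P x) \<noteq> \<infinity>" for x
    using P(2)[of x] by (simp add: L_def)
  with bdd zero scaleR parallelogram P(1)
  have "quadratic_functional (\<lambda>x. real_of_ereal (f (P x))) (\<bar>c\<bar> * C\<^sup>2)"
    using C by (rule quadratic_functional_finite_part)
  then obtain A :: "real^'n^'n" where "transpose A = A"
    and A: "(\<lambda>x. real_of_ereal (f (P x))) = (\<lambda>x. (1/2) * (x \<bullet> (A *v x)))"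
    by (rule quadratic_functional_eq_symmetric_matrix)
  moreover have "f x = (if x \<in> L then ereal ((1/2) * (x \<bullet> (A *v x))) else \<infinity>)" for x
  proof (cases "x \<in> L")
    case True
    then have "f x = ereal (real_of_ereal (f (P x)))"
      using not_MInfty[of x] P(3) by (cases "f x") (auto simp: L_def)
    then show ?thesis using True fun_cong[OF A, of x] by simp
  qed (simp add: L_def)
  ultimately show ?thesis
    unfolding gen_quad_form_def using \<open>subspace L\<close> by blast
qed

section \<open>Epi-limits of generalized quadratic forms\<close>

lemma epi_converges_liminf_ge:
  "epi_converges qs q \<Longrightarrow> xs \<longlonglongrightarrow> x \<Longrightarrow> q x \<le> liminf (\<lambda>k. qs k (xs k))"
  unfolding epi_converges_def by blast

lemma epi_converges_recoveryE:
  assumes "epi_converges qs q"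
  obtains xs where "xs \<longlonglongrightarrow> x" "limsup (\<lambda>k. qs k (xs k)) \<le> q x"
  using assms unfolding epi_converges_def by blast

lemma epi_limit_ge_minorant:
  assumes "epi_converges qs q" "isCont \<phi> x"
    and "\<forall>\<^sub>F k in sequentially. \<forall>w. \<phi> w \<le> qs k w"
  shows "\<phi> x \<le> q x"
proof -
  obtain xs where xs: "xs \<longlonglongrightarrow> x" "limsup (\<lambda>k. qs k (xs k)) \<le> q x"
    using assms(1) by (rule epi_converges_recoveryE)
  have "\<phi> x = liminf (\<lambda>k. \<phi> (xs k))"
    using isCont_tendsto_compose[OF assms(2) xs(1)] by (simp add: lim_imp_Liminf)
  also have "\<dots> \<le> liminf (\<lambda>k. qs k (xs k))"
    using assms(3) by (intro Liminf_mono) (auto elim: eventually_mono)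
  also have "\<dots> \<le> limsup (\<lambda>k. qs k (xs k))"
    by (rule Liminf_le_Limsup) simp
  finally show ?thesis using xs(2) by simp
qed

lemma epi_limit_scaleR_le:
  fixes qs :: "nat \<Rightarrow> 'a::real_normed_vector \<Rightarrow> ereal"
  assumes "epi_converges qs q" and scaleR: "\<And>k x. qs k (t *\<^sub>R x) = ereal (t\<^sup>2) * qs k x"
  shows "q (t *\<^sub>R x) \<le> ereal (t\<^sup>2) * q x"
proof -
  obtain xs where xs: "xs \<longlonglongrightarrow> x" "limsup (\<lambda>k. qs k (xs k)) \<le> q x"
    using assms(1) by (rule epi_converges_recoveryE)
  have "q (t *\<^sub>R x) \<le> liminf (\<lambda>k. qs k (t *\<^sub>R xs k))"
    by (rule epi_converges_liminf_ge[OF assms(1)]) (intro tendsto_intros xs(1))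
  also have "\<dots> \<le> limsup (\<lambda>k. ereal (t\<^sup>2) * qs k (xs k))"
    unfolding scaleR by (rule Liminf_le_Limsup) simp
  also have "\<dots> = ereal (t\<^sup>2) * limsup (\<lambda>k. qs k (xs k))"
    by (rule limsup_ereal_mult_left) simp
  also have "\<dots> \<le> ereal (t\<^sup>2) * q x"
    by (rule ereal_mult_left_mono[OF xs(2)]) simp
  finally show ?thesis .
qed

lemma epi_limit_parallelogram_le:
  fixes qs :: "nat \<Rightarrow> 'a::real_normed_vector \<Rightarrow> ereal"
  assumes "epi_converges qs q"
    and parallelogram: "\<And>k x y. qs k (x + y) + qs k (x - y) = 2 * qs k x + 2 * qs k y"
    and not_MInfty: "\<And>z. q z \<noteq> -\<infinity>"
  shows "q (x + y) + q (x - y) \<le> 2 * q x + 2 * q y"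
proof -
  obtain xs where xs: "xs \<longlonglongrightarrow> x" "limsup (\<lambda>k. qs k (xs k)) \<le> q x"
    using assms(1) by (rule epi_converges_recoveryE)
  obtain ys where ys: "ys \<longlonglongrightarrow> y" "limsup (\<lambda>k. qs k (ys k)) \<le> q y"
    using assms(1) by (rule epi_converges_recoveryE)
  define a where "a k = qs k (xs k + ys k)" for k
  define b where "b k = qs k (xs k - ys k)" for k
  have a: "q (x + y) \<le> liminf a" and b: "q (x - y) \<le> liminf b"
    unfolding a_def b_def
    by (intro epi_converges_liminf_ge[OF assms(1)] tendsto_intros xs(1) ys(1))+
  have "q (x + y) + q (x - y) \<le> liminf a + liminf b"
    using a b by (rule add_mono)
  also have "\<dots> \<le> liminf (\<lambda>k. a k + b k)"
    using a b not_MInfty[of "x + y"] not_MInfty[of "x - y"]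
    by (intro ereal_liminf_add_mono) auto
  also have "\<dots> \<le> limsup (\<lambda>k. 2 * qs k (xs k) + 2 * qs k (ys k))"
    unfolding a_def b_def parallelogram by (rule Liminf_le_Limsup) simp
  also have "\<dots> \<le> limsup (\<lambda>k. 2 * qs k (xs k)) + limsup (\<lambda>k. 2 * qs k (ys k))"
    by (rule ereal_limsup_add_mono)
  also have "\<dots> = 2 * limsup (\<lambda>k. qs k (xs k)) + 2 * limsup (\<lambda>k. qs k (ys k))"
    using limsup_ereal_mult_left[of 2] by simp
  also have "\<dots> \<le> 2 * q x + 2 * q y"
    using xs(2) ys(2) by (intro add_mono ereal_mult_left_mono) simp_all
  finally show ?thesis .
qed

lemma epi_limit_scaleR:
  fixes qs :: "nat \<Rightarrow> 'a::real_normed_vector \<Rightarrow> ereal"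
  assumes epi: "epi_converges qs q"
    and scaleR: "\<And>k t x. t \<noteq> 0 \<Longrightarrow> qs k (t *\<^sub>R x) = ereal (t\<^sup>2) * qs k x"
    and "t \<noteq> 0"
  shows "q (t *\<^sub>R x) = ereal (t\<^sup>2) * q x"
proof (rule antisym)
  have le: "q (s *\<^sub>R z) \<le> ereal (s\<^sup>2) * q z" if "s \<noteq> 0" for s z
    using epi scaleR[OF that] by (rule epi_limit_scaleR_le)
  show "q (t *\<^sub>R x) \<le> ereal (t\<^sup>2) * q x"
    using le \<open>t \<noteq> 0\<close> .
  have "q x \<le> ereal ((1/t)\<^sup>2) * q (t *\<^sub>R x)"
    using le[of "1/t" "t *\<^sub>R x"] \<open>t \<noteq> 0\<close> by simp
  then have "ereal (t\<^sup>2) * q x \<le> ereal (t\<^sup>2) * (ereal ((1/t)\<^sup>2) * q (t *\<^sub>R x))"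
    by (rule ereal_mult_left_mono) simp
  also have "\<dots> = ereal (t\<^sup>2 * (1/t)\<^sup>2) * q (t *\<^sub>R x)"
    by (simp only: mult.assoc[symmetric] times_ereal.simps(1))
  also have "t\<^sup>2 * (1/t)\<^sup>2 = 1"
    using \<open>t \<noteq> 0\<close> by (simp add: power_divide)
  finally show "ereal (t\<^sup>2) * q x \<le> q (t *\<^sub>R x)" by simp
qed

lemma epi_limit_gen_quad_form_zero_le:
  fixes qs :: "nat \<Rightarrow> real^'n \<Rightarrow> ereal"
  assumes "\<And>k. gen_quad_form (qs k)" "epi_converges qs q"
  shows "q 0 \<le> 0"
proof -
  have "q 0 \<le> liminf (\<lambda>k. qs k 0)"
    by (rule epi_converges_liminf_ge[OF assms(2)]) simp
  then show ?thesis
    by (simp add: gen_quad_form_zero[OF assms(1)] Liminf_const)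
qed

lemma gen_quad_form_epi_limit:
  fixes qs :: "nat \<Rightarrow> real^'n \<Rightarrow> ereal"
  assumes gqf: "\<And>k. gen_quad_form (qs k)" and epi: "epi_converges qs q"
    and bdd: "\<And>x. ereal (- r * (norm x)\<^sup>2) \<le> q x"
  shows "gen_quad_form q"
proof -
  have not_MInfty: "q z \<noteq> -\<infinity>" for z
    using bdd[of z] by auto
  have "q 0 \<le> 0"
    using gqf epi by (rule epi_limit_gen_quad_form_zero_le)
  with bdd[of 0] have zero: "q 0 = 0"
    by (simp add: antisym zero_ereal_def)
  have scaleR: "q (t *\<^sub>R x) = ereal (t\<^sup>2) * q x" if "t \<noteq> 0" for t x
    using epi gen_quad_form_scaleR[OF gqf] that by (rule epi_limit_scaleR)
  have parallelogram: "q (x + y) + q (x - y) = 2 * q x + 2 * q y" for x y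
  proof -
    have le: "q (u + v) + q (u - v) \<le> 2 * q u + 2 * q v" for u v
      using epi gen_quad_form_parallelogram[OF gqf] not_MInfty by (rule epi_limit_parallelogram_le)
    have "q (2 *\<^sub>R x) + q (2 *\<^sub>R y) \<le> 2 * q (x + y) + 2 * q (x - y)"
      using le[of "x + y" "x - y"] by (simp add: scaleR_2 algebra_simps)
    then have "4 * q x + 4 * q y \<le> 2 * q (x + y) + 2 * q (x - y)"
      using scaleR[of 2] by simp
    then show ?thesis
      using le[of x y] not_MInfty[of x] not_MInfty[of y] not_MInfty[of "x + y"] not_MInfty[of "x - y"]
      by (cases "q x"; cases "q y"; cases "q (x + y)"; cases "q (x - y)") auto
  qed
  show ?thesis
    using bdd zero scaleR parallelogram by (rule gen_quad_formI)
qed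

section \<open>Sequential compactness of epi-convergence\<close>

lemma eventually_seq_choice:
  fixes P :: "nat \<Rightarrow> nat \<Rightarrow> 'a \<Rightarrow> bool"
  assumes "\<And>m. \<forall>\<^sub>F k in sequentially. \<exists>y. \<forall>i\<le>m. P i k y"
  obtains ys where "\<forall>m. \<forall>\<^sub>F k in sequentially. P m k (ys k)"
proof
  define S where "S k = {m. m \<le> k \<and> (\<exists>y. \<forall>i\<le>m. P i k y)}" for k
  define ys where "ys k = (SOME y. \<forall>i\<le>Max (S k). P i k y)" for k
  show "\<forall>m. \<forall>\<^sub>F k in sequentially. P m k (ys k)"
  proof
    fix m
    have "\<forall>\<^sub>F k in sequentially. m \<in> S k"
      using assms[of m] eventually_ge_at_top[of m] by eventually_elim (simp add: S_def)
    then show "\<forall>\<^sub>F k in sequentially. P m k (ys k)"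
    proof eventually_elim
      case (elim k)
      have fin: "finite (S k)" by (simp add: S_def)
      have "Max (S k) \<in> S k"
        using fin elim by (intro Max_in) auto
      then have "\<exists>y. \<forall>i\<le>Max (S k). P i k y"
        by (simp add: S_def)
      then have "\<forall>i\<le>Max (S k). P i k (ys k)"
        unfolding ys_def by (rule someI_ex)
      moreover have "m \<le> Max (S k)"
        using fin elim by (rule Max_ge)
      ultimately show ?case by blast
    qed
  qed
qed

lemma recovery_sequenceE:
  fixes f :: "nat \<Rightarrow> 'a::metric_space \<Rightarrow> ereal"
  assumes near: "\<And>e t. 0 < e \<Longrightarrow> c < t \<Longrightarrow> \<forall>\<^sub>F k in sequentially. \<exists>y. dist y x < e \<and> f k y < t"
  obtains xs where "xs \<longlonglongrightarrow> x" "limsup (\<lambda>k. f k (xs k)) \<le> c"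
proof (cases "c = \<infinity>")
  case True
  then show ?thesis using that[of "\<lambda>k. x"] by simp
next
  case False
  then obtain u where u: "\<And>n. c < u n" "u \<longlonglongrightarrow> c"
    using approx_from_above_dense_linorder[of c \<infinity>] by (auto simp: less_PInf_Ex_of_nat)
  define P where "P i k y \<longleftrightarrow> dist y x < 1 / Suc i \<and> f k y < u i" for i k y
  have "\<forall>\<^sub>F k in sequentially. \<exists>y. \<forall>i\<le>m. P i k y" for m
  proof -
    have "c < Min (u ` {..m})"
      using u(1) by (simp add: Min_gr_iff)
    then have "\<forall>\<^sub>F k in sequentially. \<exists>y. dist y x < 1 / Suc m \<and> f k y < Min (u ` {..m})"
      by (intro near) simp_all
    then show ?thesis
    proof eventually_elim
      case (elim k)
      then obtain y where y: "dist y x < 1 / Suc m" "f k y < Min (u ` {..m})" by blast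
      have "P i k y" if "i \<le> m" for i
      proof -
        have "1 / real (Suc m) \<le> 1 / real (Suc i)" using that by (simp add: frac_le)
        then show ?thesis using y that by (simp add: P_def)
      qed
      then show ?case by blast
    qed
  qed
  then obtain ys where ys: "\<forall>m. \<forall>\<^sub>F k in sequentially. P m k (ys k)"
    by (rule eventually_seq_choice)
  have "ys \<longlonglongrightarrow> x"
  proof (rule tendstoI)
    fix e :: real assume "0 < e"
    then obtain m where "inverse (real (Suc m)) < e"
      using reals_Archimedean by blast
    then have m: "1 / Suc m < e" by (simp add: inverse_eq_divide)
    show "\<forall>\<^sub>F k in sequentially. dist (ys k) x < e"
      using ys[rule_format, of m] by eventually_elim (use m in \<open>auto simp: P_def\<close>)
  qed
  moreover have "limsup (\<lambda>k. f k (ys k)) \<le> c"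
  proof (rule LIMSEQ_le_const[OF u(2)], intro exI allI impI)
    fix m
    show "limsup (\<lambda>k. f k (ys k)) \<le> u m"
      using ys[rule_format, of m] by (intro Limsup_bounded) (auto simp: P_def elim: eventually_mono)
  qed
  ultimately show ?thesis by (rule that)
qed

lemma convergent_subseq_family:
  fixes g :: "nat \<Rightarrow> nat \<Rightarrow> ereal"
  obtains s where "strict_mono s" "\<forall>j. convergent (\<lambda>k. g j (s k))"
proof -
  interpret subseqs "\<lambda>j s. convergent (\<lambda>k. g j (s k))"
  proof
    fix j and s :: "nat \<Rightarrow> nat"
    obtain l r where "strict_mono r" "((\<lambda>k. g j (s k)) \<circ> r) \<longlonglongrightarrow> l"
      using compact_complete_linorder by blast
    then show "\<exists>r. strict_mono r \<and> convergent (\<lambda>k. g j ((s \<circ> r) k))"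
      by (auto simp: convergent_def o_def)
  qed
  have "convergent (\<lambda>k. g j (diagseq k))" for j
  proof -
    have "convergent (\<lambda>k. g j ((diagseq \<circ> (+) (Suc j)) k))"
    proof (rule diagseq_holds)
      fix r s :: "nat \<Rightarrow> nat" and n
      assume "strict_mono r" "convergent (\<lambda>k. g n (s k))"
      then show "convergent (\<lambda>k. g n ((s \<circ> r) k))"
        using convergent_subseq_convergent[of "\<lambda>k. g n (s k)" r] by (simp add: o_def)
    qed
    then obtain l where "(\<lambda>k. g j (diagseq (k + Suc j))) \<longlonglongrightarrow> l"
      by (auto simp: convergent_def o_def add.commute)
    then have "(\<lambda>k. g j (diagseq k)) \<longlonglongrightarrow> l"
      by (rule LIMSEQ_offset)
    then show ?thesis by (auto simp: convergent_def)
  qed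
  then show ?thesis
    by (intro that[OF subseq_diagseq] allI)
qed

lemma second_countable_basis_seqE:
  obtains b :: "nat \<Rightarrow> 'a::second_countable_topology set"
  where "\<forall>j. open (b j)" "\<forall>U x. open U \<and> x \<in> U \<longrightarrow> (\<exists>j. x \<in> b j \<and> b j \<subseteq> U)"
proof -
  obtain \<B> :: "'a set set" where "countable \<B>" and basis: "topological_basis \<B>"
    using ex_countable_basis by blast
  have "\<B> \<noteq> {}"
    using topological_basisE[OF basis open_UNIV UNIV_I] by blast
  have "open (from_nat_into \<B> j)" for j
    using topological_basis_open[OF basis from_nat_into[OF \<open>\<B> \<noteq> {}\<close>]] .
  moreover have "\<exists>j. x \<in> from_nat_into \<B> j \<and> from_nat_into \<B> j \<subseteq> U" if "open U" "x \<in> U" for x U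
  proof -
    obtain X where "X \<in> \<B>" "x \<in> X" "X \<subseteq> U"
      using topological_basisE[OF basis \<open>open U\<close> \<open>x \<in> U\<close>] by blast
    then show ?thesis
      using from_nat_into_surj[OF \<open>countable \<B>\<close>] by metis
  qed
  ultimately show ?thesis
    by (intro that[of "from_nat_into \<B>"]) auto
qed

lemma epi_converges_basis_infima:
  fixes f :: "nat \<Rightarrow> 'a::metric_space \<Rightarrow> ereal" and b :: "nat \<Rightarrow> 'a set"
  assumes open_b: "\<forall>j. open (b j)"
    and basis_b: "\<forall>U x. open U \<and> x \<in> U \<longrightarrow> (\<exists>j. x \<in> b j \<and> b j \<subseteq> U)"
    and l: "\<forall>j. (\<lambda>k. Inf (f k ` b j)) \<longlonglongrightarrow> l j"
  shows "epi_converges f (\<lambda>x. SUP j\<in>{j. x \<in> b j}. l j)"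
proof -
  define q where "q x = (SUP j\<in>{j. x \<in> b j}. l j)" for x
  have "q x \<le> liminf (\<lambda>k. f k (xs k))" if xs: "xs \<longlonglongrightarrow> x" for x xs
    unfolding q_def
  proof (rule SUP_least)
    fix j assume "j \<in> {j. x \<in> b j}"
    then have "\<forall>\<^sub>F k in sequentially. xs k \<in> b j"
      using open_b topological_tendstoD[OF xs] by auto
    then have "\<forall>\<^sub>F k in sequentially. Inf (f k ` b j) \<le> f k (xs k)"
      by eventually_elim (auto intro: Inf_lower)
    then have "liminf (\<lambda>k. Inf (f k ` b j)) \<le> liminf (\<lambda>k. f k (xs k))"
      by (rule Liminf_mono)
    moreover have "liminf (\<lambda>k. Inf (f k ` b j)) = l j"
      using l by (simp add: lim_imp_Liminf)
    ultimately show "l j \<le> liminf (\<lambda>k. f k (xs k))" by simp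
  qed
  moreover have "\<exists>xs. xs \<longlonglongrightarrow> x \<and> limsup (\<lambda>k. f k (xs k)) \<le> q x" for x
  proof -
    have "\<forall>\<^sub>F k in sequentially. \<exists>y. dist y x < e \<and> f k y < t" if "0 < e" "q x < t" for e t
    proof -
      obtain j where j: "x \<in> b j" "b j \<subseteq> ball x e"
        using basis_b \<open>0 < e\<close> by (meson centre_in_ball open_ball)
      have "l j \<le> q x"
        unfolding q_def using j(1) by (auto intro: SUP_upper)
      then have "l j < t"
        using \<open>q x < t\<close> by (rule le_less_trans)
      then have "\<forall>\<^sub>F k in sequentially. Inf (f k ` b j) < t"
        using l order_tendstoD(2) by blast
      then show ?thesis
      proof eventually_elim
        case (elim k)
        then obtain y where "y \<in> b j" "f k y < t"
          by (auto simp: Inf_less_iff)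
        moreover from this(1) j(2) have "dist y x < e"
          by (auto simp: dist_commute)
        ultimately show ?case by blast
      qed
    qed
    then obtain xs where "xs \<longlonglongrightarrow> x" "limsup (\<lambda>k. f k (xs k)) \<le> q x"
      by (rule recovery_sequenceE)
    then show ?thesis by blast
  qed
  ultimately show ?thesis
    unfolding epi_converges_def q_def by blast
qed

lemma epi_converges_subseqE:
  fixes f :: "nat \<Rightarrow> 'a::{metric_space, second_countable_topology} \<Rightarrow> ereal"
  obtains s q where "strict_mono s" "epi_converges (f \<circ> s) q"
proof -
  obtain b :: "nat \<Rightarrow> 'a set" where open_b: "\<forall>j. open (b j)"
    and basis_b: "\<forall>U x. open U \<and> x \<in> U \<longrightarrow> (\<exists>j. x \<in> b j \<and> b j \<subseteq> U)"
    by (rule second_countable_basis_seqE)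
  obtain s where "strict_mono s" and conv: "\<forall>j. convergent (\<lambda>k. Inf (f (s k) ` b j))"
    by (rule convergent_subseq_family)
  then have "\<forall>j. (\<lambda>k. Inf ((f \<circ> s) k ` b j)) \<longlonglongrightarrow> lim (\<lambda>k. Inf (f (s k) ` b j))"
    by (simp add: convergent_LIMSEQ_iff)
  with open_b basis_b have "epi_converges (f \<circ> s) (\<lambda>x. SUP j\<in>{j. x \<in> b j}. lim (\<lambda>k. Inf (f (s k) ` b j)))"
    by (rule epi_converges_basis_infima)
  with \<open>strict_mono s\<close> show ?thesis by (rule that)
qed

theorem proposition6p2:
  fixes qs :: "nat \<Rightarrow> real^'n \<Rightarrow> ereal"
  assumes "\<And>k. gen_quad_form (qs k)"
  shows "(\<exists>s q. strict_mono s \<and> epi_converges (qs \<circ> s) q \<and> (\<exists>x. q x \<noteq> \<infinity>))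
     \<and> (\<forall>q r. epi_converges qs q \<and> r \<ge> 0 \<and>
          (\<forall>\<^sub>F k in sequentially. \<forall>w. qs k w \<ge> ereal (- r * (norm w)\<^sup>2))
        \<longrightarrow> gen_quad_form q \<and> (\<forall>w. q w \<ge> ereal (- r * (norm w)\<^sup>2)))"
proof (intro conjI allI impI)
  obtain s q where "strict_mono s" and epi: "epi_converges (qs \<circ> s) q"
    by (rule epi_converges_subseqE)
  moreover have "q 0 \<le> 0"
    using assms epi by (intro epi_limit_gen_quad_form_zero_le[of "qs \<circ> s"]) simp_all
  then have "q 0 \<noteq> \<infinity>" by auto
  ultimately show "\<exists>s q. strict_mono s \<and> epi_converges (qs \<circ> s) q \<and> (\<exists>x. q x \<noteq> \<infinity>)"
    by blast
next
  fix q r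
  assume "epi_converges qs q \<and> r \<ge> 0 \<and>
    (\<forall>\<^sub>F k in sequentially. \<forall>w. qs k w \<ge> ereal (- r * (norm w)\<^sup>2))"
  then have epi: "epi_converges qs q"
    and bdd: "\<forall>\<^sub>F k in sequentially. \<forall>w. ereal (- r * (norm w)\<^sup>2) \<le> qs k w"
    by auto
  show lower: "ereal (- r * (norm w)\<^sup>2) \<le> q w" for w
    by (rule epi_limit_ge_minorant[OF epi _ bdd]) (intro continuous_intros)
  show "gen_quad_form q"
    using assms epi lower by (rule gen_quad_form_epi_limit)
qed

end
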